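(* Every DSC semigroup is simple, i.e. has no ideal other than itself.
   Context: For a semigroup $S$, a diagonal subsemigroup of $S\times S$ is a subsemigroup of $S\times S$ containing $\Delta=\{(s,s)\colon s\in S\}$. A congruence on $S$ is a diagonal subsemigroup of $S\times S$ that is symmetric and transitive (as a relation on $S$). A semigroup $S$ is DSC if every diagonal subsemigroup of $S\times S$ is a congruence on $S$. An ideal of $S$ is a nonempty $I\subseteq S$ with $sx,xs\in I$ for all $x\in I$, $s\in S$. *)

theory Defs
  imports Main
begin

text \<open>Semigroups are modelled by the type class semigroup_mult; the semigroup is the whole type.
  S x S carries the componentwise multiplication.\<close>

definition subsemigroup_prod :: "('a::semigroup_mult \<times> 'a) set \<Rightarrow> bool" where
  "subsemigroup_prod R \<longleftrightarrow> (\<forall>a b c d. (a, b) \<in> R \<longrightarrow> (c, d) \<in> R \<longrightarrow> (a * c, b * d) \<in> R)"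

definition diagonal_subsemigroup :: "('a::semigroup_mult \<times> 'a) set \<Rightarrow> bool" where
  "diagonal_subsemigroup R \<longleftrightarrow> subsemigroup_prod R \<and> Id \<subseteq> R"

definition semigroup_congruence :: "('a::semigroup_mult \<times> 'a) set \<Rightarrow> bool" where
  "semigroup_congruence R \<longleftrightarrow> diagonal_subsemigroup R \<and> sym R \<and> trans R"

definition DSC :: "'a::semigroup_mult itself \<Rightarrow> bool" where
  "DSC (_ :: 'a itself) \<longleftrightarrow>
     (\<forall>R :: ('a \<times> 'a) set. diagonal_subsemigroup R \<longrightarrow> semigroup_congruence R)"

definition semigroup_ideal :: "'a::semigroup_mult set \<Rightarrow> bool" where
  "semigroup_ideal I \<longleftrightarrow> I \<noteq> {} \<and> (\<forall>x\<in>I. \<forall>s. s * x \<in> I \<and> x * s \<in> I)"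

end

theory Submission
  imports Defs
begin

text \<open>For an ideal I, the relation that is the identity outside I and relates every element of
  I to everything is a diagonal subsemigroup. In a DSC semigroup it must be symmetric, so every
  element is related to a point of I, which forces it into I.\<close>

lemma diagonal_subsemigroup_Id_Un_ideal_times_UNIV:
  assumes "semigroup_ideal I"
  shows "diagonal_subsemigroup (Id \<union> I \<times> UNIV)"
  using assms unfolding semigroup_ideal_def diagonal_subsemigroup_def subsemigroup_prod_def
  by auto

lemma Id_Un_times_UNIV_sym_imp_UNIV:
  assumes "I \<noteq> {}" and "sym (Id \<union> I \<times> UNIV)"
  shows "I = UNIV"
proof -
  obtain x where "x \<in> I" using assms(1) by blast
  have "(s, x) \<in> Id \<union> I \<times> UNIV" for s
  proof -
    have "(x, s) \<in> Id \<union> I \<times> UNIV"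
      using \<open>x \<in> I\<close> by blast
    with assms(2) show ?thesis
      by (rule symD)
  qed
  then have "s \<in> I" for s
    using \<open>x \<in> I\<close> by (cases "s = x") auto
  then show ?thesis
    by blast
qed

theorem mainTheorem2:
  assumes "DSC TYPE('a::semigroup_mult)"
    and "semigroup_ideal (I :: 'a set)"
  shows "I = UNIV"
proof -
  have "semigroup_congruence (Id \<union> I \<times> UNIV)"
    using assms(1) diagonal_subsemigroup_Id_Un_ideal_times_UNIV[OF assms(2)]
    unfolding DSC_def by blast
  then have "sym (Id \<union> I \<times> UNIV)"
    unfolding semigroup_congruence_def by (elim conjE)
  moreover have "I \<noteq> {}"
    using assms(2) unfolding semigroup_ideal_def by blast
  ultimately show ?thesis
    by (rule Id_Un_times_UNIV_sym_imp_UNIV[rotated])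
qed

end
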